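(* For all integers $m,n,p\ge 2$ and $s\ge 0$, the graph $H(m,n,p,s)$ is geodetic.
   Context: All graphs are finite, simple and undirected; a graph is geodetic if between any two vertices there is at most one shortest path. For integers $a,b\ge 2$, $s\ge 0$, the graph $h(a,b,s)$ is defined as follows. Take a complete graph on vertices $x_1,\dots,x_a$ (the "$K_a$") and a complete graph on vertices $y_1,\dots,y_b$ (the "$K_b$"). For each $i\in\{1,\dots,a\}$ take a star with center $c_i$ and leaves $\ell_{i,1},\dots,\ell_{i,b}$. For each $i$, join $x_i$ to $c_i$ by a path of length $s+1$ (with $s$ new internal vertices), and for each $i$ and each $j\in\{1,\dots,b\}$, join $\ell_{i,j}$ to $y_j$ by a path of length $s+1$ (with $s$ new internal vertices). The graph $H(m,n,p,s)$ is obtained by taking disjoint copies of $h(m,n,s)$, $h(n,p,s)$ and $h(p,m,s)$ and identifying cliques: the $K_n$ of $h(m,n,s)$ is identified (vertex by vertex, via a bijection) with the $K_n$ of $h(n,p,s)$, the $K_p$ of $h(n,p,s)$ with the $K_p$ of $h(p,m,s)$, and the $K_m$ of $h(p,m,s)$ with the $K_m$ of $h(m,n,s)$ (the resulting graph does not depend on the chosen bijections up to isomorphism). *)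

theory Defs
  imports Main
begin

definition is_walk :: "'a set \<Rightarrow> ('a \<Rightarrow> 'a \<Rightarrow> bool) \<Rightarrow> 'a list \<Rightarrow> bool" where
  "is_walk V E xs \<longleftrightarrow> xs \<noteq> [] \<and> set xs \<subseteq> V \<and>
     (\<forall>i. Suc i < length xs \<longrightarrow> E (xs ! i) (xs ! Suc i))"

definition is_path :: "'a set \<Rightarrow> ('a \<Rightarrow> 'a \<Rightarrow> bool) \<Rightarrow> 'a list \<Rightarrow> bool" where
  "is_path V E xs \<longleftrightarrow> is_walk V E xs \<and> distinct xs"

definition is_shortest_path :: "'a set \<Rightarrow> ('a \<Rightarrow> 'a \<Rightarrow> bool) \<Rightarrow> 'a \<Rightarrow> 'a \<Rightarrow> 'a list \<Rightarrow> bool" where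
  "is_shortest_path V E u v xs \<longleftrightarrow>
     is_path V E xs \<and> hd xs = u \<and> last xs = v \<and>
     (\<forall>ys. is_walk V E ys \<and> hd ys = u \<and> last ys = v \<longrightarrow> length xs \<le> length ys)"

definition geodetic :: "'a set \<Rightarrow> ('a \<Rightarrow> 'a \<Rightarrow> bool) \<Rightarrow> bool" where
  "geodetic V E \<longleftrightarrow>
     (\<forall>u\<in>V. \<forall>v\<in>V. \<forall>xs ys. is_shortest_path V E u v xs \<and> is_shortest_path V E u v ys \<longrightarrow> xs = ys)"

text \<open>Vertices: X i = x_i (the K_a), Y j = y_j (the K_b), C i = c_i (star centre),
  L i j = leaf l_{i,j}, P i t (1 \<le> t \<le> s) = internal vertices of the x_i--c_i path,
  Q i j t (1 \<le> t \<le> s) = internal vertices of the l_{i,j}--y_j path. Indices start at 0.\<close>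
datatype hv = X nat | Y nat | C nat | L nat nat | P nat nat | Q nat nat nat

definition xc_node :: "nat \<Rightarrow> nat \<Rightarrow> nat \<Rightarrow> hv" where
  "xc_node s i t = (if t = 0 then X i else if t = s + 1 then C i else P i t)"

definition ly_node :: "nat \<Rightarrow> nat \<Rightarrow> nat \<Rightarrow> nat \<Rightarrow> hv" where
  "ly_node s i j t = (if t = 0 then L i j else if t = s + 1 then Y j else Q i j t)"

definition h_verts :: "nat \<Rightarrow> nat \<Rightarrow> nat \<Rightarrow> hv set" where
  "h_verts a b s =
     {X i | i. i < a} \<union> {Y j | j. j < b} \<union> {C i | i. i < a} \<union>
     {L i j | i j. i < a \<and> j < b} \<union>
     {P i t | i t. i < a \<and> 1 \<le> t \<and> t \<le> s} \<union>
     {Q i j t | i j t. i < a \<and> j < b \<and> 1 \<le> t \<and> t \<le> s}"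

definition h_arc :: "nat \<Rightarrow> nat \<Rightarrow> nat \<Rightarrow> hv \<Rightarrow> hv \<Rightarrow> bool" where
  "h_arc a b s u v \<longleftrightarrow>
     (\<exists>i i'. i < a \<and> i' < a \<and> i \<noteq> i' \<and> u = X i \<and> v = X i') \<or>
     (\<exists>j j'. j < b \<and> j' < b \<and> j \<noteq> j' \<and> u = Y j \<and> v = Y j') \<or>
     (\<exists>i j. i < a \<and> j < b \<and> u = C i \<and> v = L i j) \<or>
     (\<exists>i t. i < a \<and> t \<le> s \<and> u = xc_node s i t \<and> v = xc_node s i (t + 1)) \<or>
     (\<exists>i j t. i < a \<and> j < b \<and> t \<le> s \<and> u = ly_node s i j t \<and> v = ly_node s i j (t + 1))"

definition h_edge :: "nat \<Rightarrow> nat \<Rightarrow> nat \<Rightarrow> hv \<Rightarrow> hv \<Rightarrow> bool" where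
  "h_edge a b s u v \<longleftrightarrow> h_arc a b s u v \<or> h_arc a b s v u"

text \<open>Copy k (k = 0,1,2) is h(sz k, sz (k+1 mod 3), s) with sz = (m,n,p), i.e. the copies
  h(m,n,s), h(n,p,s), h(p,m,s).  Gluing: the K_b (Y-vertices) of copy k is identified
  with the K_a (X-vertices) of copy (k+1) mod 3, via Y j of copy k ~ X j of copy k+1.
  The function H_canon maps each vertex of the disjoint union to its class representative.\<close>

definition H_size :: "nat \<Rightarrow> nat \<Rightarrow> nat \<Rightarrow> nat \<Rightarrow> nat" where
  "H_size m n p k = (if k = 0 then m else if k = 1 then n else p)"

fun H_canon :: "nat \<times> hv \<Rightarrow> nat \<times> hv" where
  "H_canon (k, Y j) = ((k + 1) mod 3, X j)"
| "H_canon (k, v) = (k, v)"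

definition H_verts :: "nat \<Rightarrow> nat \<Rightarrow> nat \<Rightarrow> nat \<Rightarrow> (nat \<times> hv) set" where
  "H_verts m n p s =
     H_canon ` (\<Union>k<3. {k} \<times> h_verts (H_size m n p k) (H_size m n p ((k + 1) mod 3)) s)"

definition H_edge :: "nat \<Rightarrow> nat \<Rightarrow> nat \<Rightarrow> nat \<Rightarrow> nat \<times> hv \<Rightarrow> nat \<times> hv \<Rightarrow> bool" where
  "H_edge m n p s u v \<longleftrightarrow>
     (\<exists>k<3. \<exists>x y. h_edge (H_size m n p k) (H_size m n p ((k + 1) mod 3)) s x y \<and>
        u = H_canon (k, x) \<and> v = H_canon (k, y))"

end

theory Submission
  imports Defs
begin

text \<open>A vertex of \<open>H(m,n,p,s)\<close> is described by its copy \<open>k \<in> {0,1,2}\<close>, a path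
  \<open>x\<^sub>i \<dots> c\<^sub>i \<dots> y\<^sub>j\<close> of that copy through it, and its height on that path. In these coordinates
  the distance from \<open>w\<close> is given by an explicit formula, the shortest of a few candidate routes,
  and the neighbour of \<open>v \<noteq> w\<close> that is one step closer to \<open>w\<close> by an explicit function. A finite
  case analysis shows that the formula vanishes only at \<open>w\<close>, changes by at most one along every
  edge, drops by one towards the chosen neighbour, and drops along no other edge into \<open>v\<close>. The
  first three facts make the formula the graph distance; uniqueness of the closer neighbour then
  determines every shortest path backwards from its endpoint.\<close>

section \<open>Geodetic graphs from distance potentials\<close>

lemma walk_step:
  assumes "is_walk V E xs" "Suc i < length xs"
  shows "E (xs ! i) (xs ! Suc i)"
  using assms unfolding is_walk_def by blast

lemma walk_nth_mem:
  assumes "is_walk V E xs" "i < length xs"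
  shows "xs ! i \<in> V"
  using assms unfolding is_walk_def by (meson nth_mem subsetD)

lemma walk_snoc:
  assumes "is_walk V E xs" "v \<in> V" "E (last xs) v"
  shows "is_walk V E (xs @ [v])"
  unfolding is_walk_def
proof (intro conjI allI impI)
  fix i assume i: "Suc i < length (xs @ [v])"
  show "E ((xs @ [v]) ! i) ((xs @ [v]) ! Suc i)"
  proof (cases "Suc i < length xs")
    case True
    then show ?thesis using assms(1) unfolding is_walk_def by (simp add: nth_append)
  next
    case False
    then have "i = length xs - 1" "xs \<noteq> []" using i assms(1) unfolding is_walk_def by auto
    then show ?thesis using assms(3) by (simp add: nth_append last_conv_nth)
  qed
qed (use assms in \<open>auto simp: is_walk_def\<close>)

lemma walk_map:
  assumes "is_walk V E xs" "f ` V \<subseteq> V'" "\<And>u v. u \<in> V \<Longrightarrow> v \<in> V \<Longrightarrow> E u v \<Longrightarrow> E' (f u) (f v)"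
  shows "is_walk V' E' (map f xs)"
  using assms unfolding is_walk_def by (auto simp: subset_iff)

lemma walk_lipschitz:
  fixes f :: "'a \<Rightarrow> int"
  assumes walk: "is_walk V E xs"
    and lip: "\<And>u v. u \<in> V \<Longrightarrow> v \<in> V \<Longrightarrow> E u v \<Longrightarrow> \<bar>f u - f v\<bar> \<le> 1"
    and "i \<le> j" "j < length xs"
  shows "\<bar>f (xs ! i) - f (xs ! j)\<bar> \<le> int (j - i)"
  using \<open>i \<le> j\<close> \<open>j < length xs\<close>
proof (induction j rule: dec_induct)
  case base
  then show ?case by simp
next
  case (step j)
  have "\<bar>f (xs ! j) - f (xs ! Suc j)\<bar> \<le> 1"
    using lip walk_nth_mem[OF walk] walk_step[OF walk] step.prems by simp
  with step show ?case by simp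
qed

locale distance_potential =
  fixes V :: "'a set" and E :: "'a \<Rightarrow> 'a \<Rightarrow> bool" and d :: "'a \<Rightarrow> 'a \<Rightarrow> int"
  assumes nonneg: "\<And>w v. w \<in> V \<Longrightarrow> v \<in> V \<Longrightarrow> 0 \<le> d w v"
    and zero_iff: "\<And>w v. w \<in> V \<Longrightarrow> v \<in> V \<Longrightarrow> d w v = 0 \<longleftrightarrow> v = w"
    and lipschitz: "\<And>w u v. w \<in> V \<Longrightarrow> u \<in> V \<Longrightarrow> v \<in> V \<Longrightarrow> E u v \<Longrightarrow> \<bar>d w u - d w v\<bar> \<le> 1"
    and pred_ex: "\<And>w v. w \<in> V \<Longrightarrow> v \<in> V \<Longrightarrow> v \<noteq> w \<Longrightarrow> \<exists>u \<in> V. E u v \<and> d w u + 1 = d w v"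
    and pred_unique: "\<And>w u u' v. w \<in> V \<Longrightarrow> u \<in> V \<Longrightarrow> u' \<in> V \<Longrightarrow> v \<in> V \<Longrightarrow>
       E u v \<Longrightarrow> E u' v \<Longrightarrow> d w u + 1 = d w v \<Longrightarrow> d w u' + 1 = d w v \<Longrightarrow> u = u'"
begin

lemma walk_of_length_dist:
  assumes "w \<in> V" "v \<in> V"
  shows "\<exists>xs. is_walk V E xs \<and> hd xs = w \<and> last xs = v \<and> int (length xs) = d w v + 1"
proof -
  obtain N where "d w v = int N"
    using nonneg[OF assms] nonneg_int_cases by metis
  then show ?thesis
    using \<open>v \<in> V\<close>
  proof (induction N arbitrary: v)
    case 0
    then have "v = w" using zero_iff \<open>w \<in> V\<close> by simp
    then show ?case using 0 by (intro exI[of _ "[v]"]) (auto simp: is_walk_def)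
  next
    case (Suc N)
    then have "v \<noteq> w" using zero_iff[OF \<open>w \<in> V\<close>] by force
    then obtain u where u: "u \<in> V" "E u v" "d w u + 1 = d w v"
      using pred_ex \<open>w \<in> V\<close> Suc.prems by blast
    then obtain xs where "is_walk V E xs" "hd xs = w" "last xs = u" "int (length xs) = d w u + 1"
      using Suc.IH[OF _ u(1)] Suc.prems(1) by auto
    then show ?case
      using u Suc.prems walk_snoc[of V E xs v]
      by (intro exI[of _ "xs @ [v]"]) (auto simp: is_walk_def)
  qed
qed

lemma shortest_path_dist:
  assumes "w \<in> V" "v \<in> V" "is_shortest_path V E w v xs"
  shows "int (length xs) = d w v + 1" "\<And>i. i < length xs \<Longrightarrow> d w (xs ! i) = int i"
proof -
  have walk: "is_walk V E xs" and ends: "hd xs = w" "last xs = v"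
    using assms(3) unfolding is_shortest_path_def is_path_def by auto
  have "xs \<noteq> []" using walk unfolding is_walk_def by simp
  then have first: "xs ! 0 = w" and final: "xs ! (length xs - 1) = v"
    using ends by (auto simp: hd_conv_nth last_conv_nth)
  have lip: "\<And>i j. i \<le> j \<Longrightarrow> j < length xs \<Longrightarrow> \<bar>d w (xs ! i) - d w (xs ! j)\<bar> \<le> int (j - i)"
    using walk_lipschitz[OF walk, of "d w"] lipschitz \<open>w \<in> V\<close> by blast
  obtain ys where "is_walk V E ys" "hd ys = w" "last ys = v" "int (length ys) = d w v + 1"
    using walk_of_length_dist[OF assms(1,2)] by blast
  then have "int (length xs) \<le> d w v + 1"
    using assms(3) unfolding is_shortest_path_def by force
  moreover have "d w v \<le> int (length xs - 1)"
    using lip[of 0 "length xs - 1"] first final zero_iff[OF \<open>w \<in> V\<close> \<open>w \<in> V\<close>] \<open>xs \<noteq> []\<close> by simp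
  moreover have "int (length xs - 1) = int (length xs) - 1" using \<open>xs \<noteq> []\<close> by (cases xs) auto
  ultimately show len: "int (length xs) = d w v + 1" by linarith
  fix i assume i: "i < length xs"
  have "\<bar>d w w - d w (xs ! i)\<bar> \<le> int i" using lip[of 0 i] first i by simp
  moreover have "\<bar>d w (xs ! i) - d w v\<bar> \<le> int (length xs - 1 - i)"
    using lip[of i "length xs - 1"] final i by simp
  moreover have "int (length xs - 1 - i) = int (length xs) - 1 - int i" using i by arith
  ultimately show "d w (xs ! i) = int i"
    using len zero_iff[OF \<open>w \<in> V\<close> \<open>w \<in> V\<close>] unfolding abs_le_iff by simp
qed

theorem geodetic: "geodetic V E"
  unfolding geodetic_def
proof (intro ballI allI impI, elim conjE)
  fix w v xs ys
  assume "w \<in> V" "v \<in> V" and xs: "is_shortest_path V E w v xs" and ys: "is_shortest_path V E w v ys"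
  note dx = shortest_path_dist[OF \<open>w \<in> V\<close> \<open>v \<in> V\<close> xs]
  note dy = shortest_path_dist[OF \<open>w \<in> V\<close> \<open>v \<in> V\<close> ys]
  have wx: "is_walk V E xs" "last xs = v" and wy: "is_walk V E ys" "last ys = v"
    using xs ys unfolding is_shortest_path_def is_path_def by auto
  have len: "length xs = length ys" using dx(1) dy(1) by simp
  have "xs ! i = ys ! i" if "i \<le> length xs - 1" for i
    using that
  proof (induction i rule: inc_induct)
    case base
    have "xs \<noteq> []" "ys \<noteq> []" using wx wy unfolding is_walk_def by auto
    then show ?case using wx wy len by (simp add: last_conv_nth)
  next
    case (step n)
    have n: "Suc n < length xs" "Suc n < length ys" using step.hyps len by auto
    have "E (xs ! n) (xs ! Suc n)" "E (ys ! n) (xs ! Suc n)"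
      using walk_step[OF wx(1) n(1)] walk_step[OF wy(1) n(2)] step.IH by simp_all
    moreover have "d w (xs ! n) + 1 = d w (xs ! Suc n)" "d w (ys ! n) + 1 = d w (xs ! Suc n)"
      using dx(2) dy(2) n step.IH by simp_all
    ultimately show ?case
      using pred_unique \<open>w \<in> V\<close> walk_nth_mem[OF wx(1)] walk_nth_mem[OF wy(1)] n by (meson Suc_lessD)
  qed
  with len show "xs = ys" by (simp add: nth_equalityI)
qed

end

lemma shortest_path_map:
  assumes sp: "is_shortest_path V E u v xs"
    and f: "f ` V \<subseteq> V'" "inj_on f V" "\<And>u v. u \<in> V \<Longrightarrow> v \<in> V \<Longrightarrow> E u v \<Longrightarrow> E' (f u) (f v)"
    and g: "g ` V' \<subseteq> V" "\<And>x. x \<in> V \<Longrightarrow> g (f x) = x"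
      "\<And>u v. u \<in> V' \<Longrightarrow> v \<in> V' \<Longrightarrow> E' u v \<Longrightarrow> E (g u) (g v)"
  shows "is_shortest_path V' E' (f u) (f v) (map f xs)"
proof -
  have walk: "is_walk V E xs" "distinct xs" and ends: "hd xs = u" "last xs = v"
    using sp unfolding is_shortest_path_def is_path_def by auto
  have "xs \<noteq> []" "set xs \<subseteq> V" using walk unfolding is_walk_def by auto
  have "length xs \<le> length ys'"
    if "is_walk V' E' ys'" "hd ys' = f u" "last ys' = f v" for ys'
  proof -
    have "ys' \<noteq> []" using that unfolding is_walk_def by simp
    moreover have "u \<in> V" "v \<in> V"
      using ends \<open>xs \<noteq> []\<close> \<open>set xs \<subseteq> V\<close> by (auto dest: hd_in_set last_in_set)
    ultimately have "hd (map g ys') = u" "last (map g ys') = v"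
      using that g(2) by (auto simp: hd_map last_map)
    moreover have "is_walk V E (map g ys')" using walk_map[OF that(1) g(1)] g(3) by blast
    ultimately show ?thesis using sp unfolding is_shortest_path_def by fastforce
  qed
  moreover have "distinct (map f xs)"
    using walk(2) f(2) \<open>set xs \<subseteq> V\<close> by (simp add: distinct_map inj_on_subset)
  moreover have "is_walk V' E' (map f xs)" using walk_map[OF walk(1) f(1)] f(3) by blast
  ultimately show ?thesis
    using ends \<open>xs \<noteq> []\<close>
    unfolding is_shortest_path_def is_path_def by (simp add: hd_map last_map)
qed

theorem geodetic_iso:
  assumes "geodetic V' E'" "inj_on f V" "f ` V = V'"
    and edge_iff: "\<And>u v. u \<in> V \<Longrightarrow> v \<in> V \<Longrightarrow> E u v \<longleftrightarrow> E' (f u) (f v)"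
  shows "geodetic V E"
  unfolding geodetic_def
proof (intro ballI allI impI, elim conjE)
  fix u v xs ys
  assume "u \<in> V" "v \<in> V" and sp: "is_shortest_path V E u v xs" "is_shortest_path V E u v ys"
  define g where "g = inv_into V f"
  have g: "g ` V' \<subseteq> V" "\<And>x. x \<in> V \<Longrightarrow> g (f x) = x" "\<And>y. y \<in> V' \<Longrightarrow> f (g y) = y"
    using assms(2,3) unfolding g_def by (auto simp: inv_into_into f_inv_into_f)
  have gE: "E (g a) (g b)" if "a \<in> V'" "b \<in> V'" "E' a b" for a b
    using edge_iff[of "g a" "g b"] that g by auto
  have "map f xs = map f ys"
    using assms(1) \<open>u \<in> V\<close> \<open>v \<in> V\<close> assms(3) edge_iff
      shortest_path_map[OF sp(1) _ assms(2) _ g(1,2) gE]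
      shortest_path_map[OF sp(2) _ assms(2) _ g(1,2) gE]
    unfolding geodetic_def by blast
  moreover have "set xs \<subseteq> V" "set ys \<subseteq> V"
    using sp unfolding is_shortest_path_def is_path_def is_walk_def by auto
  ultimately show "xs = ys"
    using assms(2) by (simp add: inj_on_map_eq_map inj_on_subset[OF _ Un_least])
qed

section \<open>The site graph\<close>

text \<open>Copy \<open>k\<close> of \<open>h(a,b,s)\<close> in coordinates, with \<open>l = s + 1\<close>: \<open>Stem k i h\<close> is the vertex at
  distance \<open>h\<close> from \<open>x\<^sub>i\<close> on the path from \<open>x\<^sub>i\<close> to \<open>c\<^sub>i\<close> (\<open>0 \<le> h \<le> l\<close>), and \<open>Branch k i j h\<close> the
  vertex at distance \<open>h\<close> from \<open>x\<^sub>i\<close> on the path from \<open>x\<^sub>i\<close> via \<open>c\<^sub>i\<close> and its \<open>j\<close>-th leaf to \<open>y\<^sub>j\<close>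
  (\<open>l < h \<le> 2l\<close>). The end \<open>y\<^sub>j\<close> of that path, at height \<open>2l + 1\<close>, is the clique vertex
  \<open>Stem ((k + 1) mod 3) j 0\<close> of the next copy.\<close>

datatype site = Stem nat nat int | Branch nat nat nat int

fun copy :: "site \<Rightarrow> nat" where
  "copy (Stem k i h) = k"
| "copy (Branch k i j h) = k"

fun stem :: "site \<Rightarrow> nat" where
  "stem (Stem k i h) = i"
| "stem (Branch k i j h) = i"

text \<open>On stems the value \<open>0\<close> is junk; it only enters \<open>site_pred\<close> in branches that are never taken.\<close>

fun target :: "site \<Rightarrow> nat" where
  "target (Stem k i h) = 0"
| "target (Branch k i j h) = j"

fun height :: "site \<Rightarrow> int" where
  "height (Stem k i h) = h"
| "height (Branch k i j h) = h"

fun in_range :: "int \<Rightarrow> site \<Rightarrow> bool" where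
  "in_range l (Stem k i h) \<longleftrightarrow> k < 3 \<and> 0 \<le> h \<and> h \<le> l"
| "in_range l (Branch k i j h) \<longleftrightarrow> k < 3 \<and> l < h \<and> h \<le> 2 * l"

fun site_valid :: "(nat \<Rightarrow> nat) \<Rightarrow> int \<Rightarrow> site \<Rightarrow> bool" where
  "site_valid sz l (Stem k i h) \<longleftrightarrow> in_range l (Stem k i h) \<and> i < sz k"
| "site_valid sz l (Branch k i j h) \<longleftrightarrow>
     in_range l (Branch k i j h) \<and> i < sz k \<and> j < sz ((k + 1) mod 3)"

inductive site_arc :: "int \<Rightarrow> site \<Rightarrow> site \<Rightarrow> bool" for l where
  clique: "i \<noteq> i' \<Longrightarrow> site_arc l (Stem k i 0) (Stem k i' 0)"
| stem: "0 \<le> h \<Longrightarrow> h < l \<Longrightarrow> site_arc l (Stem k i h) (Stem k i (h + 1))"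
| fork: "site_arc l (Stem k i l) (Branch k i j (l + 1))"
| branch: "l < h \<Longrightarrow> h < 2 * l \<Longrightarrow> site_arc l (Branch k i j h) (Branch k i j (h + 1))"
| junction: "site_arc l (Branch k i j (2 * l)) (Stem ((k + 1) mod 3) j 0)"

inductive_simps site_arc_simps [simp]:
  "site_arc l (Stem k i h) (Stem k' i' h')"
  "site_arc l (Stem k i h) (Branch k' i' j' h')"
  "site_arc l (Branch k i j h) (Stem k' i' h')"
  "site_arc l (Branch k i j h) (Branch k' i' j' h')"

definition site_edge :: "int \<Rightarrow> site \<Rightarrow> site \<Rightarrow> bool" where
  "site_edge l a b \<longleftrightarrow> site_arc l a b \<or> site_arc l b a"

lemma site_valid_in_range: "site_valid sz l v \<Longrightarrow> in_range l v"
  by (cases v) auto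

lemma in_range_cases:
  assumes "in_range l w"
  obtains (Stem) kw iw hw where "w = Stem kw iw hw" "kw < 3" "0 \<le> hw" "hw \<le> l"
  | (Branch) kw iw jw hw where "w = Branch kw iw jw hw" "kw < 3" "l < hw" "hw \<le> 2 * l"
  using assms by (cases w) auto

lemma less_3_cases:
  fixes k :: nat
  assumes "k < 3" obtains "k = 0" | "k = 1" | "k = 2"
  using assms by linarith

section \<open>Distances in the site graph\<close>

text \<open>\<open>site_dist l a b\<close> is the shortest of a few candidate routes. Inside one copy: along the
  common path, through the clique at the bottom, or through the clique at the top. From \<open>a\<close> to a
  site \<open>b\<close> of the next copy: forwards over the top of \<open>a\<close>'s copy (\<open>site_dist_to_next l a j\<close>
  being the distance to the clique vertex \<open>j\<close> of the next copy), or backwards through the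
  remaining copy.\<close>

fun site_dist_to_next :: "int \<Rightarrow> site \<Rightarrow> nat \<Rightarrow> int" where
  "site_dist_to_next l (Stem k i h) j' = 2 * l + 1 - h"
| "site_dist_to_next l (Branch k i j h) j' =
     (if j = j' then 2 * l + 1 - h else min (2 * l + 2 - h) (h + 1))"

fun site_dist_same :: "int \<Rightarrow> site \<Rightarrow> site \<Rightarrow> int" where
  "site_dist_same l (Stem k i h) (Stem k' i' h') = (if i = i' then \<bar>h - h'\<bar> else h + h' + 1)"
| "site_dist_same l (Stem k i h) (Branch k' i' j' h') =
     (if i = i' then h' - h else min (h + h' + 1) (4 * l + 2 - h - h'))"
| "site_dist_same l (Branch k i j h) (Stem k' i' h') =
     (if i = i' then h - h' else min (h + h' + 1) (4 * l + 2 - h - h'))"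
| "site_dist_same l (Branch k i j h) (Branch k' i' j' h') =
     (if i = i' then (if j = j' then \<bar>h - h'\<bar> else min (h + h' - 2 * l) (4 * l + 3 - h - h'))
      else min (h + h' + 1) (4 * l + 2 - h - h' + (if j = j' then 0 else 1)))"

definition site_dist_next :: "int \<Rightarrow> site \<Rightarrow> site \<Rightarrow> int" where
  "site_dist_next l a b =
     min (site_dist_to_next l a (stem b) + height b) (height a + 4 * l + 2 - height b)"

definition site_dist :: "int \<Rightarrow> site \<Rightarrow> site \<Rightarrow> int" where
  "site_dist l a b =
     (if copy a = copy b then site_dist_same l a b
      else if copy b = (copy a + 1) mod 3 then site_dist_next l a b else site_dist_next l b a)"

definition path_site :: "int \<Rightarrow> nat \<Rightarrow> nat \<Rightarrow> nat \<Rightarrow> int \<Rightarrow> site" where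
  "path_site l k i j h =
     (if h \<le> l then Stem k i h else if h \<le> 2 * l then Branch k i j h else Stem ((k + 1) mod 3) j 0)"

text \<open>Shortest paths from \<open>w\<close> reach the centres of copy \<open>k\<close> from above only through this branch
  (the value \<open>0\<close> is junk: from the remaining copy the centres are reached from below).\<close>

definition exit_branch :: "site \<Rightarrow> nat \<Rightarrow> nat" where
  "exit_branch w k =
     (if copy w = k then target w else if copy w = (k + 1) mod 3 then stem w else 0)"

definition clique_pred :: "int \<Rightarrow> site \<Rightarrow> nat \<Rightarrow> nat \<Rightarrow> site" where
  "clique_pred l w k i =
     (if copy w = k then (if stem w = i then Stem k i 1 else Stem k (stem w) 0)
      else if copy w = (k + 1) mod 3 then
        (if site_dist l w (Stem k i 1) + 1 = site_dist l w (Stem k i 0) then Stem k i 1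
         else Branch ((k + 2) mod 3) (target w) i (2 * l))
      else if target w \<noteq> i \<and> site_dist l w (Stem k (target w) 0) + 1 = site_dist l w (Stem k i 0)
        then Stem k (target w) 0
      else Branch ((k + 2) mod 3) (stem w) i (2 * l))"

fun site_pred :: "int \<Rightarrow> site \<Rightarrow> site \<Rightarrow> site" where
  "site_pred l w (Stem k i h) =
     (if h = 0 then clique_pred l w k i
      else if site_dist l w (Stem k i (h - 1)) + 1 = site_dist l w (Stem k i h)
        then Stem k i (h - 1)
      else path_site l k i (exit_branch w k) (h + 1))"
| "site_pred l w (Branch k i j h) =
     (if site_dist l w (path_site l k i j (h - 1)) + 1 = site_dist l w (Branch k i j h)
      then path_site l k i j (h - 1) else path_site l k i j (h + 1))"

lemmas site_dist_unfold = site_dist_def site_dist_next_def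

text \<open>The following facts are finite checks: once the copies of all sites involved are fixed, both
  sides are explicit piecewise linear expressions in the heights.\<close>

lemma site_dist_nonneg:
  assumes "in_range l w" "in_range l v"
  shows "0 \<le> site_dist l w v"
  using assms
  by (elim in_range_cases less_3_cases; simp add: site_dist_unfold;
      (auto simp: abs_if min_def split: if_splits; presburger)?)

lemma site_dist_eq_0_iff:
  assumes "in_range l w" "in_range l v"
  shows "site_dist l w v = 0 \<longleftrightarrow> v = w"
  using assms
  by (elim in_range_cases less_3_cases; simp add: site_dist_unfold;
      (auto simp: abs_if min_def split: if_splits; presburger)?)

lemma site_dist_lipschitz_clique:
  assumes "in_range l w" "k < 3"
  shows "\<bar>site_dist l w (Stem k i 0) - site_dist l w (Stem k i' 0)\<bar> \<le> 1"
  using assms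
  by (elim in_range_cases less_3_cases; simp add: site_dist_unfold;
      (auto simp: abs_if min_def split: if_splits; presburger)?)

lemma site_dist_lipschitz_stem:
  assumes "in_range l w" "k < 3" "0 \<le> h" "h < l"
  shows "\<bar>site_dist l w (Stem k i h) - site_dist l w (Stem k i (h + 1))\<bar> \<le> 1"
  using assms
  by (elim in_range_cases less_3_cases; simp add: site_dist_unfold;
      (auto simp: abs_if min_def split: if_splits; presburger)?)

lemma site_dist_lipschitz_fork:
  assumes "in_range l w" "k < 3"
  shows "\<bar>site_dist l w (Stem k i l) - site_dist l w (Branch k i j (l + 1))\<bar> \<le> 1"
  using assms
  by (elim in_range_cases less_3_cases; simp add: site_dist_unfold;
      (auto simp: abs_if min_def split: if_splits; presburger)?)

lemma site_dist_lipschitz_branch: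
  assumes "in_range l w" "k < 3" "l < h" "h < 2 * l"
  shows "\<bar>site_dist l w (Branch k i j h) - site_dist l w (Branch k i j (h + 1))\<bar> \<le> 1"
  using assms
  by (elim in_range_cases less_3_cases; simp add: site_dist_unfold;
      (auto simp: abs_if min_def split: if_splits; presburger)?)

text \<open>Junction lemmas are stated with \<open>k'\<close> for \<open>(k + 1) mod 3\<close>, so that they still match as
  introduction rules once the simplifier has rewritten \<open>k + 1\<close> to \<open>Suc k\<close>.\<close>

lemma site_dist_lipschitz_junction:
  assumes "in_range l w" "k < 3" "k' = (k + 1) mod 3"
  shows "\<bar>site_dist l w (Branch k i j (2 * l)) - site_dist l w (Stem k' j 0)\<bar> \<le> 1"
  using assms
  by (elim in_range_cases less_3_cases; simp add: site_dist_unfold;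
      (auto simp: abs_if min_def split: if_splits; presburger)?)

lemma site_dist_pred_clique:
  assumes "in_range l w" "k < 3" "Stem k i 0 \<noteq> w" "1 \<le> l"
  shows "site_dist l w (site_pred l w (Stem k i 0)) + 1 = site_dist l w (Stem k i 0)"
  using assms
  by (elim in_range_cases less_3_cases; simp add: site_dist_unfold clique_pred_def;
      (auto simp: abs_if min_def split: if_splits; presburger)?)

lemma site_dist_pred_stem:
  assumes "in_range l w" "k < 3" "0 < h" "h \<le> l" "Stem k i h \<noteq> w"
  shows "site_dist l w (site_pred l w (Stem k i h)) + 1 = site_dist l w (Stem k i h)"
  using assms
  by (elim in_range_cases less_3_cases; simp add: site_dist_unfold path_site_def exit_branch_def;
      (auto simp: abs_if min_def split: if_splits; presburger)?)

lemma site_dist_descent_branch: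
  assumes "in_range l w" "k < 3" "l < h" "h \<le> 2 * l" "Branch k i j h \<noteq> w"
  shows "site_dist l w (path_site l k i j (h - 1)) + 1 = site_dist l w (Branch k i j h) \<or>
    site_dist l w (path_site l k i j (h + 1)) + 1 = site_dist l w (Branch k i j h)"
proof -
  have "h = l + 1 \<or> l + 1 < h" "h = 2 * l \<or> h < 2 * l" using assms by auto
  then show ?thesis
    using assms
    by (elim disjE in_range_cases less_3_cases; simp add: site_dist_unfold path_site_def;
        (auto simp: abs_if min_def split: if_splits; presburger)?)
qed

lemma site_pred_unique_clique:
  assumes "in_range l w" "k < 3" "i \<noteq> i'"
    and "site_dist l w (Stem k i 0) + 1 = site_dist l w (Stem k i' 0)"
  shows "site_pred l w (Stem k i' 0) = Stem k i 0"
  using assms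
  by (elim in_range_cases less_3_cases; simp add: site_dist_unfold clique_pred_def;
      (auto simp: abs_if min_def split: if_splits; presburger)?)

lemma site_pred_unique_stem:
  assumes "in_range l w" "k < 3" "0 \<le> h" "h < l"
  shows "site_dist l w (Stem k i h) + 1 = site_dist l w (Stem k i (h + 1)) \<Longrightarrow>
      site_pred l w (Stem k i (h + 1)) = Stem k i h"
    and "site_dist l w (Stem k i (h + 1)) + 1 = site_dist l w (Stem k i h) \<Longrightarrow>
      site_pred l w (Stem k i h) = Stem k i (h + 1)"
  using assms
  by (elim in_range_cases less_3_cases; simp add: site_dist_unfold clique_pred_def path_site_def;
      (auto simp: abs_if min_def split: if_splits; presburger)?)+

lemma site_pred_unique_fork:
  assumes "in_range l w" "k < 3" "1 \<le> l"
  shows "site_dist l w (Stem k i l) + 1 = site_dist l w (Branch k i j (l + 1)) \<Longrightarrow>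
      site_pred l w (Branch k i j (l + 1)) = Stem k i l"
    and "site_dist l w (Branch k i j (l + 1)) + 1 = site_dist l w (Stem k i l) \<Longrightarrow>
      site_pred l w (Stem k i l) = Branch k i j (l + 1)"
  using assms
  by (elim in_range_cases less_3_cases; simp add: site_dist_unfold exit_branch_def path_site_def;
      (auto simp: abs_if min_def split: if_splits; presburger)?)+

lemma site_pred_unique_branch:
  assumes "in_range l w" "k < 3" "l < h" "h < 2 * l"
  shows "site_dist l w (Branch k i j h) + 1 = site_dist l w (Branch k i j (h + 1)) \<Longrightarrow>
      site_pred l w (Branch k i j (h + 1)) = Branch k i j h"
    and "site_dist l w (Branch k i j (h + 1)) + 1 = site_dist l w (Branch k i j h) \<Longrightarrow>
      site_pred l w (Branch k i j h) = Branch k i j (h + 1)"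
  using assms
  by (elim in_range_cases less_3_cases; simp add: site_dist_unfold path_site_def;
      (auto simp: abs_if min_def split: if_splits; presburger)?)+

lemma site_pred_unique_junction:
  assumes "in_range l w" "k < 3" "k' = (k + 1) mod 3" "1 \<le> l"
  shows "site_dist l w (Branch k i j (2 * l)) + 1 = site_dist l w (Stem k' j 0) \<Longrightarrow>
      site_pred l w (Stem k' j 0) = Branch k i j (2 * l)"
    and "site_dist l w (Stem k' j 0) + 1 = site_dist l w (Branch k i j (2 * l)) \<Longrightarrow>
      site_pred l w (Branch k i j (2 * l)) = Stem k' j 0"
  using assms
  by (elim in_range_cases less_3_cases; simp add: site_dist_unfold clique_pred_def path_site_def;
      (auto simp: abs_if min_def split: if_splits; presburger)?)+

lemma site_dist_lipschitz:
  assumes "site_edge l u v" "in_range l w" "in_range l u" "in_range l v"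
  shows "\<bar>site_dist l w u - site_dist l w v\<bar> \<le> 1"
proof -
  have "\<bar>site_dist l w a - site_dist l w b\<bar> \<le> 1" if "site_arc l a b" "in_range l a" for a b
    using that(1,2)
    by (cases rule: site_arc.cases)
      (auto intro: assms(2) site_dist_lipschitz_clique site_dist_lipschitz_stem
        site_dist_lipschitz_fork site_dist_lipschitz_branch site_dist_lipschitz_junction)
  then show ?thesis using assms unfolding site_edge_def by (metis abs_minus_commute)
qed

lemma site_dist_pred:
  assumes "in_range l w" "in_range l v" "v \<noteq> w" "1 \<le> l"
  shows "site_dist l w (site_pred l w v) + 1 = site_dist l w v"
  using assms(2)
proof (cases rule: in_range_cases)
  case (Stem k i h)
  then show ?thesis
    using assms site_dist_pred_clique[of l w k i] site_dist_pred_stem[of l w k h i]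
    by (cases "h = 0") auto
next
  case (Branch k i j h)
  then show ?thesis
    using assms site_dist_descent_branch[of l w k h i j] by auto
qed

lemma site_pred_unique:
  assumes "site_edge l u v" "in_range l w" "in_range l u" "in_range l v" "1 \<le> l"
    and "site_dist l w u + 1 = site_dist l w v"
  shows "site_pred l w v = u"
  using assms
  unfolding site_edge_def
  by (elim disjE site_arc.cases)
    (auto simp del: site_pred.simps intro: site_pred_unique_clique site_pred_unique_stem
      site_pred_unique_fork site_pred_unique_branch site_pred_unique_junction)

lemma site_edge_site_pred:
  assumes "in_range l w" "in_range l v" "1 \<le> l"
  shows "site_edge l (site_pred l w v) v"
  using assms
  by (elim in_range_cases less_3_cases)
    (auto simp: site_edge_def path_site_def clique_pred_def exit_branch_def)

lemma site_valid_path_site: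
  assumes "k < 3" "i < sz k" "j < sz ((k + 1) mod 3)" "0 \<le> h" "h \<le> 2 * l + 1"
  shows "site_valid sz l (path_site l k i j h)"
  using assms by (auto simp: path_site_def)

lemma site_valid_copy_stem_target:
  assumes "site_valid sz l w" "\<And>k. 0 < sz k"
  shows "copy w < 3" "stem w < sz (copy w)" "target w < sz ((copy w + 1) mod 3)"
  using assms by (cases w; simp)+

lemma exit_branch_less:
  assumes "site_valid sz l w" "\<And>k. 0 < sz k"
  shows "exit_branch w k < sz ((k + 1) mod 3)"
  using site_valid_copy_stem_target[OF assms] assms(2)
  by (cases "copy w = k"; cases "copy w = (k + 1) mod 3") (simp_all add: exit_branch_def)

lemma site_valid_clique_pred:
  assumes "site_valid sz l w" "k < 3" "i < sz k" "\<And>k. 0 < sz k" "1 \<le> l"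
  shows "site_valid sz l (clique_pred l w k i)"
  using site_valid_copy_stem_target[OF assms(1,4)] assms(2,3,5)
  by (elim less_3_cases) (auto simp: clique_pred_def numeral_2_eq_2)

lemma site_valid_site_pred:
  assumes "site_valid sz l w" "site_valid sz l v" "\<And>k. 0 < sz k" "1 \<le> l"
  shows "site_valid sz l (site_pred l w v)"
proof (cases v)
  case (Stem k i h)
  then have v: "k < 3" "i < sz k" "0 \<le> h" "h \<le> l" using assms(2) by simp_all
  have "site_valid sz l (clique_pred l w k i)"
    using site_valid_clique_pred[OF assms(1) v(1,2) assms(3,4)] .
  moreover have "site_valid sz l (path_site l k i (exit_branch w k) (h + 1))"
    using site_valid_path_site[OF v(1,2) exit_branch_less[OF assms(1,3)]] v assms(4) by simp
  ultimately show ?thesis using Stem v by simp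
next
  case (Branch k i j h)
  then have v: "k < 3" "i < sz k" "j < sz ((k + 1) mod 3)" "l < h" "h \<le> 2 * l"
    using assms(2) by simp_all
  then show ?thesis using Branch site_valid_path_site[OF v(1-3)] by simp
qed

theorem geodetic_site_graph:
  assumes "\<And>k. 0 < sz k" "1 \<le> l"
  shows "geodetic {v. site_valid sz l v} (site_edge l)"
proof -
  define V where "V = {v. site_valid sz l v}"
  have ranges: "in_range l v" if "v \<in> V" for v
    using that site_valid_in_range unfolding V_def by blast
  interpret distance_potential V "site_edge l" "site_dist l"
  proof unfold_locales
    show "0 \<le> site_dist l w v" if "w \<in> V" "v \<in> V" for w v
      using that ranges by (simp add: site_dist_nonneg)
    show "site_dist l w v = 0 \<longleftrightarrow> v = w" if "w \<in> V" "v \<in> V" for w v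
      using that ranges by (simp add: site_dist_eq_0_iff)
    show "\<bar>site_dist l w u - site_dist l w v\<bar> \<le> 1"
      if "w \<in> V" "u \<in> V" "v \<in> V" "site_edge l u v" for w u v
      using that ranges by (simp add: site_dist_lipschitz)
    show "\<exists>u \<in> V. site_edge l u v \<and> site_dist l w u + 1 = site_dist l w v"
      if "w \<in> V" "v \<in> V" "v \<noteq> w" for w v
      using that ranges assms
      by (intro bexI[of _ "site_pred l w v"])
        (auto simp: V_def site_dist_pred site_edge_site_pred site_valid_site_pred)
    show "u = u'"
      if "w \<in> V" "u \<in> V" "u' \<in> V" "v \<in> V" "site_edge l u v" "site_edge l u' v"
        "site_dist l w u + 1 = site_dist l w v" "site_dist l w u' + 1 = site_dist l w v"
      for w u u' v
      using that ranges assms(2) site_pred_unique by metis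
  qed
  from geodetic show ?thesis unfolding V_def .
qed

section \<open>Coordinates on \<open>H(m,n,p,s)\<close>\<close>

fun coord :: "nat \<Rightarrow> nat \<times> hv \<Rightarrow> site" where
  "coord s (k, X i) = Stem k i 0"
| "coord s (k, Y j) = Stem ((k + 1) mod 3) j 0"
| "coord s (k, C i) = Stem k i (int s + 1)"
| "coord s (k, P i t) = Stem k i (int t)"
| "coord s (k, L i j) = Branch k i j (int s + 2)"
| "coord s (k, Q i j t) = Branch k i j (int s + 2 + int t)"

lemma coord_H_canon [simp]: "coord s (H_canon (k, x)) = coord s (k, x)"
  by (cases x) auto

lemma coord_xc_node: "t \<le> s + 1 \<Longrightarrow> coord s (k, xc_node s i t) = Stem k i (int t)"
  unfolding xc_node_def by auto

lemma coord_ly_node: "t \<le> s \<Longrightarrow> coord s (k, ly_node s i j t) = Branch k i j (int s + 2 + int t)"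
  unfolding ly_node_def by auto

lemma coord_ly_node_end: "coord s (k, ly_node s i j (Suc s)) = Stem ((k + 1) mod 3) j 0"
  unfolding ly_node_def by auto

lemma xc_node_in_h_verts: "i < a \<Longrightarrow> t \<le> s + 1 \<Longrightarrow> xc_node s i t \<in> h_verts a b s"
  unfolding xc_node_def h_verts_def by auto

lemma ly_node_in_h_verts: "i < a \<Longrightarrow> j < b \<Longrightarrow> t \<le> s + 1 \<Longrightarrow> ly_node s i j t \<in> h_verts a b s"
  unfolding ly_node_def h_verts_def by auto

lemma h_arc_in_h_verts: "h_arc a b s x y \<Longrightarrow> x \<in> h_verts a b s \<and> y \<in> h_verts a b s"
  unfolding h_arc_def h_verts_def xc_node_def ly_node_def by (auto split: if_splits)

lemma H_verts_iff: "u \<in> H_verts m n p s \<longleftrightarrow>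
    (\<exists>k<3. \<exists>x \<in> h_verts (H_size m n p k) (H_size m n p ((k + 1) mod 3)) s. u = H_canon (k, x))"
  unfolding H_verts_def by blast

lemma H_canon_in_H_verts:
  "k < 3 \<Longrightarrow> x \<in> h_verts (H_size m n p k) (H_size m n p ((k + 1) mod 3)) s \<Longrightarrow>
    H_canon (k, x) \<in> H_verts m n p s"
  unfolding H_verts_def by blast

lemma site_valid_coord: "u \<in> H_verts m n p s \<Longrightarrow> site_valid (H_size m n p) (int s + 1) (coord s u)"
  unfolding H_verts_iff h_verts_def by auto

lemma inj_on_coord: "inj_on (coord s) (H_verts m n p s)"
  by (auto simp: inj_on_def H_verts_iff h_verts_def)

lemma coord_image: "coord s ` H_verts m n p s = {v. site_valid (H_size m n p) (int s + 1) v}"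
proof (intro equalityI subsetI)
  fix v assume "v \<in> {v. site_valid (H_size m n p) (int s + 1) v}"
  then have v: "site_valid (H_size m n p) (int s + 1) v" by simp
  show "v \<in> coord s ` H_verts m n p s"
  proof (cases v)
    case (Stem k i h)
    then have "H_canon (k, xc_node s i (nat h)) \<in> H_verts m n p s"
      "coord s (k, xc_node s i (nat h)) = v"
      using v by (auto simp: coord_xc_node intro!: H_canon_in_H_verts xc_node_in_h_verts)
    then show ?thesis by (metis coord_H_canon image_eqI)
  next
    case (Branch k i j h)
    then have "H_canon (k, ly_node s i j (nat (h - int s - 2))) \<in> H_verts m n p s"
      "coord s (k, ly_node s i j (nat (h - int s - 2))) = v"
      using v by (auto simp: coord_ly_node intro!: H_canon_in_H_verts ly_node_in_h_verts)
    then show ?thesis by (metis coord_H_canon image_eqI)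
  qed
qed (use site_valid_coord in blast)

lemma h_arc_site_arc: "h_arc a b s x y \<Longrightarrow> site_arc (int s + 1) (coord s (k, x)) (coord s (k, y))"
  unfolding h_arc_def
  by (auto simp: xc_node_def ly_node_def)

lemma h_arc_clique: "i < a \<Longrightarrow> i' < a \<Longrightarrow> i \<noteq> i' \<Longrightarrow> h_arc a b s (X i) (X i')"
  unfolding h_arc_def by blast

lemma h_arc_star: "i < a \<Longrightarrow> j < b \<Longrightarrow> h_arc a b s (C i) (L i j)"
  unfolding h_arc_def by blast

lemma h_arc_xc_node: "i < a \<Longrightarrow> t \<le> s \<Longrightarrow> h_arc a b s (xc_node s i t) (xc_node s i (Suc t))"
  unfolding h_arc_def by fastforce

lemma h_arc_ly_node: "i < a \<Longrightarrow> j < b \<Longrightarrow> t \<le> s \<Longrightarrow> h_arc a b s (ly_node s i j t) (ly_node s i j (Suc t))"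
  unfolding h_arc_def by fastforce

lemma site_arc_h_arc:
  assumes "site_arc (int s + 1) a b" "site_valid sz (int s + 1) a" "site_valid sz (int s + 1) b"
  shows "\<exists>k<3. \<exists>x y. h_arc (sz k) (sz ((k + 1) mod 3)) s x y \<and>
    coord s (k, x) = a \<and> coord s (k, y) = b"
  using assms(1)
proof (cases rule: site_arc.cases)
  case (clique i i' k)
  then show ?thesis
    using assms(2,3) h_arc_clique[of i "sz k" i'] by fastforce
next
  case (stem h k i)
  then have "h_arc (sz k) (sz ((k + 1) mod 3)) s (xc_node s i (nat h)) (xc_node s i (Suc (nat h)))"
    "coord s (k, xc_node s i (nat h)) = a" "coord s (k, xc_node s i (Suc (nat h))) = b"
    using assms(2) by (simp_all add: h_arc_xc_node coord_xc_node)
  then show ?thesis using stem assms(2) by auto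
next
  case (fork k i j)
  then show ?thesis
    using assms(2,3) h_arc_star[of i "sz k" j "sz ((k + 1) mod 3)"] by fastforce
next
  case (branch h k i j)
  define t where "t = nat (h - int s - 2)"
  have "h_arc (sz k) (sz ((k + 1) mod 3)) s (ly_node s i j t) (ly_node s i j (Suc t))"
    "coord s (k, ly_node s i j t) = a" "coord s (k, ly_node s i j (Suc t)) = b"
    using branch assms(2) unfolding t_def by (simp_all add: h_arc_ly_node coord_ly_node)
  then show ?thesis using branch assms(2) by auto
next
  case (junction k i j)
  have "h_arc (sz k) (sz ((k + 1) mod 3)) s (ly_node s i j s) (ly_node s i j (Suc s))"
    "coord s (k, ly_node s i j s) = a" "coord s (k, ly_node s i j (Suc s)) = b"
    using junction assms(2) by (simp_all add: h_arc_ly_node coord_ly_node coord_ly_node_end)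
  then show ?thesis using junction assms(2) by auto
qed

lemma H_edge_iff_site_edge:
  assumes "u \<in> H_verts m n p s" "v \<in> H_verts m n p s"
  shows "H_edge m n p s u v \<longleftrightarrow> site_edge (int s + 1) (coord s u) (coord s v)"
proof
  assume "H_edge m n p s u v"
  then show "site_edge (int s + 1) (coord s u) (coord s v)"
    unfolding H_edge_def h_edge_def site_edge_def by (auto dest: h_arc_site_arc)
next
  have arc: "H_edge m n p s u v"
    if uv: "site_arc (int s + 1) (coord s u) (coord s v)"
      "u \<in> H_verts m n p s" "v \<in> H_verts m n p s"
    for u v
  proof -
    obtain k x y where k: "k < 3" "h_arc (H_size m n p k) (H_size m n p ((k + 1) mod 3)) s x y"
      "coord s (k, x) = coord s u" "coord s (k, y) = coord s v"
      using site_arc_h_arc[OF uv(1) site_valid_coord site_valid_coord] uv(2,3) by blast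
    then have "H_canon (k, x) \<in> H_verts m n p s" "H_canon (k, y) \<in> H_verts m n p s"
      using h_arc_in_h_verts H_canon_in_H_verts by blast+
    then have "u = H_canon (k, x)" "v = H_canon (k, y)"
      using inj_on_coord[THEN inj_onD] uv(2,3) k(3,4) by (metis coord_H_canon)+
    then show ?thesis unfolding H_edge_def h_edge_def using k by blast
  qed
  assume "site_edge (int s + 1) (coord s u) (coord s v)"
  then show "H_edge m n p s u v"
    using arc[of u v] arc[of v u] assms unfolding site_edge_def H_edge_def h_edge_def by blast
qed

theorem proposition3:
  fixes m n p s :: nat
  assumes "m \<ge> 2" and "n \<ge> 2" and "p \<ge> 2"
  shows "geodetic (H_verts m n p s) (H_edge m n p s)"
proof -
  have "\<And>k. 0 < H_size m n p k" using assms by (simp add: H_size_def)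
  then have "geodetic {v. site_valid (H_size m n p) (int s + 1) v} (site_edge (int s + 1))"
    by (rule geodetic_site_graph) simp
  then show ?thesis
    using inj_on_coord coord_image H_edge_iff_site_edge by (rule geodetic_iso)
qed

end
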